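(* Let $G=(V,E)$ be a finite, simple, undirected, connected graph with no isolated vertices that has at least one split independent set. Then $\beta_s(G)\le \Gamma_s(G)$ and $\gamma_s(G)\le i_s(G)$.
   Context: For $X\subseteq V$, $\langle X\rangle$ denotes the induced subgraph on $X$. A set $D\subseteq V$ is dominating if every vertex of $V\setminus D$ has a neighbor in $D$. A dominating set $S$ is a split dominating set if $\langle V\setminus S\rangle$ is disconnected or a $K_1$. A split dominating set $S$ is a minimal split dominating set if for every $u\in S$ the set $S\setminus\{u\}$ is not a split dominating set. A set $S$ is a split independent set if $S$ is independent and $\langle V\setminus S\rangle$ is disconnected or a $K_1$; it is a maximal split independent set if for every $v\in V\setminus S$, either $S\cup\{v\}$ is not independent or $\langle V\setminus (S\cup\{v\})\rangle$ is connected. Parameters: $\gamma_s(G)=\min\{|S|: S\text{ split dominating}\}$; $\Gamma_s(G)=\max\{|S|: S\text{ minimal split dominating}\}$; $i_s(G)=\min\{|S|: S\text{ maximal split independent}\}$; $\beta_s(G)=\max\{|S|: S\text{ maximal split independent}\}$. *)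

theory Defs
  imports Main
begin

definition simple_graph :: "'a set \<Rightarrow> ('a \<Rightarrow> 'a \<Rightarrow> bool) \<Rightarrow> bool" where
  "simple_graph V E \<longleftrightarrow> finite V \<and> (\<forall>u v. E u v \<longrightarrow> u \<in> V \<and> v \<in> V)
     \<and> (\<forall>u v. E u v \<longrightarrow> E v u) \<and> (\<forall>u. \<not> E u u)"

definition induced_connected :: "('a \<Rightarrow> 'a \<Rightarrow> bool) \<Rightarrow> 'a set \<Rightarrow> bool" where
  "induced_connected E X \<longleftrightarrow>
     (\<forall>u\<in>X. \<forall>v\<in>X. (\<lambda>x y. E x y \<and> x \<in> X \<and> y \<in> X)\<^sup>*\<^sup>* u v)"

definition disconnected_or_K1 :: "('a \<Rightarrow> 'a \<Rightarrow> bool) \<Rightarrow> 'a set \<Rightarrow> bool" where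
  "disconnected_or_K1 E X \<longleftrightarrow> card X = 1 \<or> (X \<noteq> {} \<and> \<not> induced_connected E X)"

definition no_isolated :: "'a set \<Rightarrow> ('a \<Rightarrow> 'a \<Rightarrow> bool) \<Rightarrow> bool" where
  "no_isolated V E \<longleftrightarrow> (\<forall>v\<in>V. \<exists>u. E v u)"

definition dominating :: "'a set \<Rightarrow> ('a \<Rightarrow> 'a \<Rightarrow> bool) \<Rightarrow> 'a set \<Rightarrow> bool" where
  "dominating V E D \<longleftrightarrow> D \<subseteq> V \<and> (\<forall>v\<in>V - D. \<exists>u\<in>D. E v u)"

definition split_dominating :: "'a set \<Rightarrow> ('a \<Rightarrow> 'a \<Rightarrow> bool) \<Rightarrow> 'a set \<Rightarrow> bool" where
  "split_dominating V E S \<longleftrightarrow> dominating V E S \<and> disconnected_or_K1 E (V - S)"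

definition minimal_split_dominating :: "'a set \<Rightarrow> ('a \<Rightarrow> 'a \<Rightarrow> bool) \<Rightarrow> 'a set \<Rightarrow> bool" where
  "minimal_split_dominating V E S \<longleftrightarrow>
     split_dominating V E S \<and> (\<forall>u\<in>S. \<not> split_dominating V E (S - {u}))"

definition independent :: "('a \<Rightarrow> 'a \<Rightarrow> bool) \<Rightarrow> 'a set \<Rightarrow> bool" where
  "independent E S \<longleftrightarrow> (\<forall>u\<in>S. \<forall>v\<in>S. \<not> E u v)"

definition split_independent :: "'a set \<Rightarrow> ('a \<Rightarrow> 'a \<Rightarrow> bool) \<Rightarrow> 'a set \<Rightarrow> bool" where
  "split_independent V E S \<longleftrightarrow> S \<subseteq> V \<and> independent E S \<and> disconnected_or_K1 E (V - S)"

definition maximal_split_independent :: "'a set \<Rightarrow> ('a \<Rightarrow> 'a \<Rightarrow> bool) \<Rightarrow> 'a set \<Rightarrow> bool" where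
  "maximal_split_independent V E S \<longleftrightarrow> split_independent V E S \<and>
     (\<forall>v\<in>V - S. \<not> independent E (insert v S) \<or> induced_connected E (V - insert v S))"

definition gamma_s :: "'a set \<Rightarrow> ('a \<Rightarrow> 'a \<Rightarrow> bool) \<Rightarrow> nat" where
  "gamma_s V E = Min (card ` {S. split_dominating V E S})"

definition Gamma_s :: "'a set \<Rightarrow> ('a \<Rightarrow> 'a \<Rightarrow> bool) \<Rightarrow> nat" where
  "Gamma_s V E = Max (card ` {S. minimal_split_dominating V E S})"

definition i_s :: "'a set \<Rightarrow> ('a \<Rightarrow> 'a \<Rightarrow> bool) \<Rightarrow> nat" where
  "i_s V E = Min (card ` {S. maximal_split_independent V E S})"

definition beta_s :: "'a set \<Rightarrow> ('a \<Rightarrow> 'a \<Rightarrow> bool) \<Rightarrow> nat" where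
  "beta_s V E = Max (card ` {S. maximal_split_independent V E S})"

end

theory Submission
  imports Defs
begin

text \<open>In a graph without isolated vertices a maximal split independent set S is
  dominating: a vertex v outside S with no neighbour in S could be added to S
  without destroying independence, so by maximality V - S - {v} would be connected;
  a neighbour of v lies in it, hence V - S itself would be connected, yet it
  has at least two vertices. Independent dominating sets are minimal dominating,
  so maximal split independent sets are minimal split dominating sets, and both
  inequalities follow by comparing extrema over nested families.\<close>

lemma induced_connected_insert:
  assumes conn: "induced_connected E X" and "u \<in> X" and "E v u" and "E u v"
  shows "induced_connected E (insert v X)"
proof -
  let ?R = "\<lambda>x y. E x y \<and> x \<in> insert v X \<and> y \<in> insert v X"
  have "(\<lambda>x y. E x y \<and> x \<in> X \<and> y \<in> X) \<le> ?R" by auto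
  then have lift: "?R\<^sup>*\<^sup>* x y" if "x \<in> X" "y \<in> X" for x y
    using conn that rtranclp_mono unfolding induced_connected_def by blast
  have step: "?R v u" "?R u v"
    using assms(2-4) by auto
  have to_u: "?R\<^sup>*\<^sup>* x u" if "x \<in> insert v X" for x
    using that lift[of x u] r_into_rtranclp[of ?R, OF step(1)] assms(2) by blast
  have from_u: "?R\<^sup>*\<^sup>* u y" if "y \<in> insert v X" for y
    using that lift[of u y] r_into_rtranclp[of ?R, OF step(2)] assms(2) by blast
  show ?thesis
    unfolding induced_connected_def using to_u from_u by (blast intro: rtranclp_trans)
qed

lemma independent_insert:
  assumes "independent E S" and "\<not> E v v"
    and "\<forall>u\<in>S. \<not> E v u \<and> \<not> E u v"
  shows "independent E (insert v S)"
  using assms unfolding independent_def by blast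

lemma maximal_split_independent_dominating:
  assumes g: "simple_graph V E" and "no_isolated V E"
    and m: "maximal_split_independent V E S"
  shows "dominating V E S"
  unfolding dominating_def
proof (intro conjI ballI)
  have ind: "independent E S" and split: "disconnected_or_K1 E (V - S)"
    and max: "\<forall>v\<in>V - S. \<not> independent E (insert v S) \<or> induced_connected E (V - insert v S)"
    using m unfolding maximal_split_independent_def split_independent_def by auto
  show "S \<subseteq> V"
    using m unfolding maximal_split_independent_def split_independent_def by blast
  fix v assume v: "v \<in> V - S"
  show "\<exists>u\<in>S. E v u"
  proof (rule ccontr)
    assume undominated: "\<not> (\<exists>u\<in>S. E v u)"
    have sym: "\<And>a b. E a b \<Longrightarrow> E b a" and "\<not> E v v"
      and inV: "\<And>a b. E a b \<Longrightarrow> b \<in> V"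
      using g unfolding simple_graph_def by auto
    obtain u where vu: "E v u"
      using \<open>no_isolated V E\<close> v unfolding no_isolated_def by blast
    have u: "u \<in> V - insert v S"
      using vu inV undominated \<open>\<not> E v v\<close> by blast
    have "independent E (insert v S)"
      using independent_insert[OF ind \<open>\<not> E v v\<close>] undominated sym by blast
    then have "induced_connected E (V - insert v S)"
      using max v by blast
    then have "induced_connected E (insert v (V - insert v S))"
      using u vu sym[OF vu] by (rule induced_connected_insert)
    moreover have "insert v (V - insert v S) = V - S"
      using v by blast
    ultimately have "card (V - S) = 1"
      using split unfolding disconnected_or_K1_def by simp
    then obtain w where "V - S = {w}"
      by (rule card_1_singletonE)
    then show False
      using u v by auto
  qed
qed

lemma independent_dominating_Diff:
  assumes "independent E S" and "u \<in> S" and "S \<subseteq> V"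
  shows "\<not> dominating V E (S - {u})"
  using assms unfolding dominating_def independent_def by blast

lemma maximal_split_independent_minimal_split_dominating:
  assumes "simple_graph V E" and "no_isolated V E"
    and m: "maximal_split_independent V E S"
  shows "minimal_split_dominating V E S"
proof -
  have ind: "independent E S" and "disconnected_or_K1 E (V - S)" and "S \<subseteq> V"
    using m unfolding maximal_split_independent_def split_independent_def by simp_all
  then have "split_dominating V E S"
    using maximal_split_independent_dominating[OF assms] unfolding split_dominating_def by blast
  moreover have "\<not> split_dominating V E (S - {u})" if "u \<in> S" for u
    using independent_dominating_Diff[OF ind that \<open>S \<subseteq> V\<close>] unfolding split_dominating_def by blast
  ultimately show ?thesis
    unfolding minimal_split_dominating_def by blast
qed

text \<open>Inclusion-maximality suffices: if adding v keeps T independent, then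
  V - insert v T is empty (vacuously connected) or not disconnected_or_K1.\<close>

lemma maximal_split_independent_exists:
  assumes "finite V" and "split_independent V E S"
  shows "\<exists>T. maximal_split_independent V E T"
proof -
  let ?A = "{S. split_independent V E S}"
  have "?A \<subseteq> Pow V"
    unfolding split_independent_def by blast
  then have "finite ?A"
    using \<open>finite V\<close> finite_subset by blast
  then obtain T where T: "T \<in> ?A" and T_max: "\<forall>S\<in>?A. T \<subseteq> S \<longrightarrow> T = S"
    using finite_has_maximal assms(2) by blast
  have "\<not> independent E (insert v T) \<or> induced_connected E (V - insert v T)"
    if v: "v \<in> V - T" for v
  proof -
    have "\<not> split_independent V E (insert v T)"
      using T_max v by blast
    then show ?thesis
      using T v unfolding split_independent_def disconnected_or_K1_def induced_connected_def
      by auto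
  qed
  then show ?thesis
    using T unfolding maximal_split_independent_def by blast
qed

theorem mainTheorem3:
  fixes V :: "'a set" and E :: "'a \<Rightarrow> 'a \<Rightarrow> bool"
  assumes "simple_graph V E"
    and "V \<noteq> {}"
    and "induced_connected E V"
    and "no_isolated V E"
    and "\<exists>S. split_independent V E S"
  shows "beta_s V E \<le> Gamma_s V E \<and> gamma_s V E \<le> i_s V E"
proof -
  let ?I = "{S. maximal_split_independent V E S}"
  let ?M = "{S. minimal_split_dominating V E S}"
  let ?D = "{S. split_dominating V E S}"
  have "finite V"
    using assms(1) unfolding simple_graph_def by blast
  have IM: "?I \<subseteq> ?M"
    using maximal_split_independent_minimal_split_dominating[OF assms(1,4)] by blast
  have MD: "?M \<subseteq> ?D"
    unfolding minimal_split_dominating_def by blast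
  have "card ` ?D \<subseteq> card ` Pow V"
    unfolding split_dominating_def dominating_def by blast
  then have finD: "finite (card ` ?D)"
    using \<open>finite V\<close> finite_subset by blast
  then have finM: "finite (card ` ?M)"
    using MD finite_subset image_mono by metis
  have neI: "card ` ?I \<noteq> {}"
    using maximal_split_independent_exists \<open>finite V\<close> assms(5) by blast
  have "beta_s V E \<le> Gamma_s V E"
    unfolding beta_s_def Gamma_s_def using Max_mono[OF image_mono[OF IM] neI finM] .
  moreover have "gamma_s V E \<le> i_s V E"
    unfolding gamma_s_def i_s_def
    using Min_antimono[OF image_mono[OF subset_trans[OF IM MD]] neI finD] .
  ultimately show ?thesis ..
qed

end
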